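(* For every $(\overline{u}_{T,k+1/2})_{k=1}^4\in\mathbb{R}^4$ and every saturations $S_1,\dots,S_4$, the interfacial mobility ratios $\overline{\boldsymbol{\chi}}_\ell=\boldsymbol{A}^{-1}\boldsymbol{B}\boldsymbol{\chi}_\ell$ are well defined, and for every $k\in\{1,\dots,4\}$, $$\overline{V}_{w,k+1/2}+\overline{V}_{\textit{nw},k+1/2}=\overline{u}_{T,k+1/2}.$$
   Context: Indices in $\{1,2,3,4\}$ are cyclic mod 4. Two phases $w,\textit{nw}$ with mobilities $\lambda_w,\lambda_{\textit{nw}}\ge0$ (functions of the wetting saturation $S$) with $\lambda_T=\lambda_w+\lambda_{\textit{nw}}>0$; $\chi_{\ell,k}=\lambda_\ell(S_k)/\lambda_T(S_k)$ and $\boldsymbol{\chi}_\ell=(\chi_{\ell,1},\dots,\chi_{\ell,4})^T$. Limiter $\varphi(r)=\dfrac{r^4+r^3+r^2+r}{r^4+r^3+r^2+r+1}$, $r\ge0$. $\overline{\omega}^V_{k+1/2}=\varphi(\max(0,\overline{u}_{T,k-1/2}/\overline{u}_{T,k+1/2}))$ if $\overline{u}_{T,k+1/2}>0$, $=\varphi(\max(0,\overline{u}_{T,k+3/2}/\overline{u}_{T,k+1/2}))$ if $\overline{u}_{T,k+1/2}<0$, $=0$ otherwise. $\boldsymbol{A}$: $a_{kk}=1$, $a_{k,k-1}=-\overline{\omega}^V_{k+1/2}$ if $\overline{u}_{T,k+1/2}\ge0$ (else $0$), $a_{k,k+1}=-\overline{\omega}^V_{k+1/2}$ if $\overline{u}_{T,k+1/2}<0$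 (else $0$), other entries $0$. $\boldsymbol{B}$: $b_{kk}=1-\overline{\omega}^V_{k+1/2}$ if $\overline{u}_{T,k+1/2}\ge0$ (else $0$), $b_{k,k+1}=1-\overline{\omega}^V_{k+1/2}$ if $\overline{u}_{T,k+1/2}<0$ (else $0$), other entries $0$. $\overline{\chi}_{\ell,k+1/2}$ is the $k$-th entry of $\overline{\boldsymbol{\chi}}_\ell$, and the viscous flux is $\overline{V}_{\ell,k+1/2}=\overline{\chi}_{\ell,k+1/2}\overline{u}_{T,k+1/2}$. *)

theory Defs
  imports "HOL-Analysis.Analysis"
begin

text \<open>Cells/interfaces are indexed by the numeral type 4 (arithmetic mod 4).
  Index k of a vector u stands for the interface k+1/2; so u$(k-1) is the
  interface k-1/2 and u$(k+1) is k+3/2.\<close>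

definition limiter :: "real \<Rightarrow> real" where
  "limiter r = (r^4 + r^3 + r^2 + r) / (r^4 + r^3 + r^2 + r + 1)"

definition omegaV :: "real^4 \<Rightarrow> 4 \<Rightarrow> real" where
  "omegaV u k =
     (if u$k > 0 then limiter (max 0 (u$(k-1) / u$k))
      else if u$k < 0 then limiter (max 0 (u$(k+1) / u$k))
      else 0)"

definition matA :: "real^4 \<Rightarrow> real^4^4" where
  "matA u = (\<chi> k j. if j = k then 1
                 else if j = k - 1 \<and> u$k \<ge> 0 then - omegaV u k
                 else if j = k + 1 \<and> u$k < 0 then - omegaV u k
                 else 0)"

definition matB :: "real^4 \<Rightarrow> real^4^4" where
  "matB u = (\<chi> k j. if j = k \<and> u$k \<ge> 0 then 1 - omegaV u k
                 else if j = k + 1 \<and> u$k < 0 then 1 - omegaV u k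
                 else 0)"

definition chiVec :: "(real \<Rightarrow> real) \<Rightarrow> (real \<Rightarrow> real) \<Rightarrow> real^4 \<Rightarrow> real^4" where
  "chiVec lam lamT S = (\<chi> k. lam (S$k) / lamT (S$k))"

definition chiBar :: "real^4 \<Rightarrow> (real \<Rightarrow> real) \<Rightarrow> (real \<Rightarrow> real) \<Rightarrow> real^4 \<Rightarrow> real^4" where
  "chiBar u lam lamT S = matrix_inv (matA u) *v (matB u *v chiVec lam lamT S)"

definition Vflux :: "real^4 \<Rightarrow> (real \<Rightarrow> real) \<Rightarrow> (real \<Rightarrow> real) \<Rightarrow> real^4 \<Rightarrow> 4 \<Rightarrow> real" where
  "Vflux u lam lamT S k = chiBar u lam lamT S $ k * u$k"

end

theory Submission
  imports Defs
begin

text \<open>Since the limiter takes values in [0,1), row k of A is e_k - \<omega>_k e_j with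
  0 \<le> \<omega>_k < 1. Such a matrix is invertible: at a component of maximal modulus of a
  kernel vector x, x_m = \<omega>_m x_j forces \<bar>x_m\<bar> \<le> \<omega>_m \<bar>x_m\<bar>, so x = 0.
  Moreover A and B have the same row sums 1 - \<omega>_k, so A^-1 B fixes the vector of
  ones. As the mobility ratios of the two phases add up to one, so do the
  interfacial ratios, and hence the viscous fluxes add up to the total velocity.\<close>

lemma matrix_inv_left:
  fixes A :: "'a::semiring_1^'n^'m"
  assumes "invertible A"
  shows "matrix_inv A ** A = mat 1"
  using someI_ex[OF assms[unfolded invertible_def]] unfolding matrix_inv_def by blast

lemma matrix_inv_mult_eq:
  fixes A :: "'a::comm_semiring_1^'n^'m"
  assumes "invertible A" and "A *v x = y"
  shows "matrix_inv A *v y = x"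
  using assms by (metis matrix_inv_left matrix_vector_mul_assoc matrix_vector_mul_lid)

lemma invertible_if_row_contraction:
  fixes A :: "real^'n^'n"
  assumes rows: "\<And>x k. (A *v x)$k = x$k - w k * x$(p k)"
    and contraction: "\<And>k. \<bar>w k\<bar> < 1"
  shows "invertible A"
proof -
  have "x = 0" if kernel: "A *v x = 0" for x :: "real^'n"
  proof -
    have "Max (range (\<lambda>k. \<bar>x$k\<bar>)) \<in> range (\<lambda>k. \<bar>x$k\<bar>)"
      by (rule Max_in) auto
    then obtain m where "\<bar>x$m\<bar> = Max (range (\<lambda>k. \<bar>x$k\<bar>))"
      by (metis imageE)
    then have max: "\<bar>x$k\<bar> \<le> \<bar>x$m\<bar>" for k
      by simp
    have "x$m = w m * x$(p m)"
      using rows[of x m] kernel by simp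
    then have "\<bar>x$m\<bar> \<le> \<bar>w m\<bar> * \<bar>x$m\<bar>"
      using max[of "p m"] by (simp add: abs_mult mult_left_mono)
    then have "\<bar>x$m\<bar> = 0"
      using contraction[of m] by (smt (verit) mult_less_cancel_right2 abs_ge_zero)
    then show ?thesis
      using max by (simp add: vec_eq_iff)
  qed
  then show ?thesis
    unfolding invertible_left_inverse matrix_left_invertible_ker by blast
qed

lemma sum_two_point:
  fixes a b :: "'b::comm_monoid_add"
  assumes "l \<noteq> (k::'a::finite)"
  shows "(\<Sum>j\<in>UNIV. if j = k then a else if j = l then b else 0) = a + b"
proof -
  have "(\<Sum>j\<in>UNIV. if j = k then a else if j = l then b else 0)
      = (\<Sum>j\<in>UNIV. (if j = k then a else 0) + (if j = l then b else 0))"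
    using assms by (intro sum.cong) auto
  then show ?thesis
    by (simp add: sum.distrib)
qed

lemma limiter_nonneg: "r \<ge> 0 \<Longrightarrow> 0 \<le> limiter r"
  unfolding limiter_def by simp

lemma limiter_less_one:
  assumes "r \<ge> 0"
  shows "limiter r < 1"
proof -
  have "0 \<le> r^4 + r^3 + r^2 + r"
    using assms by simp
  then show ?thesis
    unfolding limiter_def by simp
qed

lemma omegaV_nonneg: "0 \<le> omegaV u k"
  unfolding omegaV_def by (simp add: limiter_nonneg)

lemma omegaV_less_one: "omegaV u k < 1"
  unfolding omegaV_def by (simp add: limiter_less_one)

lemma neighbours_ne_4: "(k::4) - 1 \<noteq> k" "(k::4) + 1 \<noteq> k"
  by (induct k; simp)+

lemma matA_mult_vector_nth:
  "(matA u *v x)$k = x$k - omegaV u k * x$(if u$k \<ge> 0 then k - 1 else k + 1)"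
  unfolding matrix_vector_mult_def matA_def using neighbours_ne_4[of k]
  by (cases "u$k \<ge> 0")
     (auto simp: if_distrib[of "\<lambda>a. a * _"] sum_two_point cong: if_cong)

lemma matB_mult_vector_nth:
  "(matB u *v x)$k = (1 - omegaV u k) * x$(if u$k \<ge> 0 then k else k + 1)"
  unfolding matrix_vector_mult_def matB_def using neighbours_ne_4[of k]
  by (cases "u$k \<ge> 0")
     (auto simp: if_distrib[of "\<lambda>a. a * _"] sum.If_cases cong: if_cong)

lemma invertible_matA: "invertible (matA u)"
  by (rule invertible_if_row_contraction[OF matA_mult_vector_nth])
     (use omegaV_nonneg omegaV_less_one in auto)

lemma matA_matB_same_row_sums: "matA u *v (\<chi> k. 1) = matB u *v (\<chi> k. 1)"
  by (simp add: vec_eq_iff matA_mult_vector_nth matB_mult_vector_nth)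

lemma matrix_inv_matA_matB_ones: "matrix_inv (matA u) *v (matB u *v (\<chi> k. 1)) = (\<chi> k. 1)"
  by (rule matrix_inv_mult_eq[OF invertible_matA matA_matB_same_row_sums])

lemma chiVec_add_complementary:
  assumes "\<And>s. lam1 s + lam2 s \<noteq> 0"
  shows "chiVec lam1 (\<lambda>s. lam1 s + lam2 s) S + chiVec lam2 (\<lambda>s. lam1 s + lam2 s) S = (\<chi> k. 1)"
  using assms unfolding chiVec_def by (simp add: vec_eq_iff add_divide_distrib[symmetric])

lemma chiBar_add_complementary:
  assumes "\<And>s. lam1 s + lam2 s \<noteq> 0"
  shows "chiBar u lam1 (\<lambda>s. lam1 s + lam2 s) S + chiBar u lam2 (\<lambda>s. lam1 s + lam2 s) S
    = (\<chi> k. 1)"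
  unfolding chiBar_def
  by (simp add: matrix_vector_right_distrib[symmetric] chiVec_add_complementary[OF assms]
      matrix_inv_matA_matB_ones)

theorem mainTheorem3:
  fixes u :: "real^4" and S :: "real^4" and lam_w lam_nw :: "real \<Rightarrow> real"
  assumes "\<And>s. lam_w s \<ge> 0" and "\<And>s. lam_nw s \<ge> 0"
    and "\<And>s. lam_w s + lam_nw s > 0"
  shows "invertible (matA u) \<and>
    (\<forall>k. Vflux u lam_w (\<lambda>s. lam_w s + lam_nw s) S k
        + Vflux u lam_nw (\<lambda>s. lam_w s + lam_nw s) S k = u$k)"
proof -
  have "chiBar u lam_w (\<lambda>s. lam_w s + lam_nw s) S + chiBar u lam_nw (\<lambda>s. lam_w s + lam_nw s) S
      = (\<chi> k. 1)"
    using assms(3) by (intro chiBar_add_complementary) (metis less_irrefl)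
  then have "Vflux u lam_w (\<lambda>s. lam_w s + lam_nw s) S k
      + Vflux u lam_nw (\<lambda>s. lam_w s + lam_nw s) S k = u$k" for k
    unfolding Vflux_def by (metis distrib_right mult_1 vector_add_component vec_lambda_beta)
  with invertible_matA show ?thesis
    by blast
qed

end
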